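(* Let $(R,\mathfrak{m})$ be a Noetherian local ring, $M$ a finitely generated $R$-module, $S \subseteq M$ a subset, and $\mathscr{E}$ an $R$-submodule of $\mathrm{Hom}_R(M,R)$. Let $I^{\mathscr{E}}(S,M) := \{y \in \langle S \rangle \mid f(y) \in \mathfrak{m} \text{ for all } f \in \mathscr{E}\}$, an $R$-submodule of $\langle S\rangle$. Then $\delta^{\mathscr{E}}_\mathfrak{m}(S,M) = \lambda_R(\langle S\rangle / I^{\mathscr{E}}(S,M))$, where $\lambda_R$ denotes length.
   Context: $\langle S\rangle$ is the submodule generated by $S$. A free $\mathscr{E}$-summand of $M$ is a direct summand $F$ (with complement $G$) of $M$, $F \cong R^n$, such that each coordinate of the projection $M \to F \cong R^n$ along $G$ lies in $\mathscr{E}$. $\delta^{\mathscr{E}}_\mathfrak{m}(S,M)$ is the largest integer $n\ge 0$ such that there is a free $\mathscr{E}$-summand of $M$ of rank $n$ contained in $\langle S\rangle$. *)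

theory Defs
  imports Main "HOL-Library.Extended_Nat"
begin

definition ring_ideal :: "'r::comm_ring_1 set \<Rightarrow> bool" where
  "ring_ideal I \<longleftrightarrow> module.subspace ((*) :: 'r \<Rightarrow> 'r \<Rightarrow> 'r) I"

definition maximal_ideal :: "'r::comm_ring_1 set \<Rightarrow> bool" where
  "maximal_ideal I \<longleftrightarrow> ring_ideal I \<and> I \<noteq> UNIV \<and>
     (\<forall>J. ring_ideal J \<and> I \<subseteq> J \<and> J \<noteq> UNIV \<longrightarrow> J = I)"

definition noetherian_ring :: "'r::comm_ring_1 itself \<Rightarrow> bool" where
  "noetherian_ring _ \<longleftrightarrow> (\<forall>I::'r set. ring_ideal I \<longrightarrow>
     (\<exists>A. finite A \<and> I = module.span ((*) :: 'r \<Rightarrow> 'r \<Rightarrow> 'r) A))"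

definition noetherian_local_ring :: "'r::comm_ring_1 set \<Rightarrow> bool" where
  "noetherian_local_ring mm \<longleftrightarrow> noetherian_ring TYPE('r) \<and> maximal_ideal mm \<and>
     (\<forall>J. maximal_ideal J \<longrightarrow> J = mm)"

definition fin_gen_module :: "('r::comm_ring_1 \<Rightarrow> 'm::ab_group_add \<Rightarrow> 'm) \<Rightarrow> bool" where
  "fin_gen_module s \<longleftrightarrow> (\<exists>A. finite A \<and> module.span s A = UNIV)"

definition dual_submodule ::
  "('r::comm_ring_1 \<Rightarrow> 'm::ab_group_add \<Rightarrow> 'm) \<Rightarrow> ('m \<Rightarrow> 'r) set \<Rightarrow> bool" where
  "dual_submodule s E \<longleftrightarrow> E \<subseteq> {f. module_hom s (*) f} \<and> (\<lambda>x. 0) \<in> E \<and>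
     (\<forall>f\<in>E. \<forall>g\<in>E. (\<lambda>x. f x + g x) \<in> E) \<and> (\<forall>c. \<forall>f\<in>E. (\<lambda>x. c * f x) \<in> E)"

definition proj_along :: "'m::ab_group_add set \<Rightarrow> 'm set \<Rightarrow> 'm \<Rightarrow> 'm" where
  "proj_along F G x = (THE p. p \<in> F \<and> x - p \<in> G)"

text \<open>R^n, realised as functions nat => R vanishing outside {..<n}.\<close>
definition free_mod :: "nat \<Rightarrow> (nat \<Rightarrow> 'r::comm_ring_1) set" where
  "free_mod n = {v. \<forall>i\<ge>n. v i = 0}"

definition free_E_summand ::
  "('r::comm_ring_1 \<Rightarrow> 'm::ab_group_add \<Rightarrow> 'm) \<Rightarrow> ('m \<Rightarrow> 'r) set \<Rightarrow> 'm set \<Rightarrow> nat \<Rightarrow> bool" where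
  "free_E_summand s E F n \<longleftrightarrow>
     (\<exists>G (\<phi> :: 'm \<Rightarrow> nat \<Rightarrow> 'r).
        module.subspace s F \<and> module.subspace s G \<and>
        (\<forall>x. \<exists>a\<in>F. \<exists>b\<in>G. x = a + b) \<and> F \<inter> G = {0} \<and>
        (\<forall>x\<in>F. \<forall>y\<in>F. \<phi> (x + y) = (\<lambda>i. \<phi> x i + \<phi> y i)) \<and>
        (\<forall>c. \<forall>x\<in>F. \<phi> (s c x) = (\<lambda>i. c * \<phi> x i)) \<and>
        bij_betw \<phi> F (free_mod n) \<and>
        (\<forall>i<n. (\<lambda>x. \<phi> (proj_along F G x) i) \<in> E))"

definition delta_E ::
  "('r::comm_ring_1 \<Rightarrow> 'm::ab_group_add \<Rightarrow> 'm) \<Rightarrow> ('m \<Rightarrow> 'r) set \<Rightarrow> 'm set \<Rightarrow> nat" where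
  "delta_E s E S = (GREATEST n. \<exists>F. free_E_summand s E F n \<and> F \<subseteq> module.span s S)"

definition I_E ::
  "('r::comm_ring_1 \<Rightarrow> 'm::ab_group_add \<Rightarrow> 'm) \<Rightarrow> 'r set \<Rightarrow> ('m \<Rightarrow> 'r) set \<Rightarrow> 'm set \<Rightarrow> 'm set" where
  "I_E s mm E S = {y \<in> module.span s S. \<forall>f\<in>E. f y \<in> mm}"

text \<open>Length of the quotient module N/I (I \<subseteq> N submodules of M): supremum of the lengths
  of strict chains of submodules I = c 0 \<subset> ... \<subset> c k = N (submodules of N/I correspond
  to submodules of M between I and N).\<close>
definition quot_length ::
  "('r::comm_ring_1 \<Rightarrow> 'm::ab_group_add \<Rightarrow> 'm) \<Rightarrow> 'm set \<Rightarrow> 'm set \<Rightarrow> enat" where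
  "quot_length s N I = (SUP k \<in> {k. \<exists>c :: nat \<Rightarrow> 'm set. c 0 = I \<and> c k = N \<and>
       (\<forall>i\<le>k. module.subspace s (c i)) \<and> (\<forall>i<k. c i \<subset> c (Suc i))}. enat k)"

end

theory Submission
  imports Defs
begin

text \<open>A strict chain \<open>I = c 0 \<subset> \<dots> \<subset> c k = \<langle>S\<rangle>\<close> yields elements \<open>x i \<in> c (i+1) - c i\<close>; since
  \<open>mm\<langle>S\<rangle> \<subseteq> I\<close> and elements outside \<open>mm\<close> are units, the \<open>x i\<close> are linearly independent modulo
  \<open>I\<close> over \<open>R/mm\<close>. An element of \<open>\<langle>S\<rangle>\<close> outside \<open>I\<close> is sent to a unit by some functional in \<open>E\<close>,
  so a Gram-Schmidt style elimination turns the \<open>x i\<close> into a dual system: \<open>e j \<in> \<langle>S\<rangle>\<close> and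
  \<open>f i \<in> E\<close> with \<open>f i (e j) = \<delta>\<^sub>i\<^sub>j\<close>. Such a system spans a free \<open>E\<close>-summand, complemented by the
  common kernel of the \<open>f i\<close>. Conversely, the coordinate functionals of a free \<open>E\<close>-summand of
  rank \<open>n\<close> inside \<open>\<langle>S\<rangle>\<close> separate the chain \<open>I + \<langle>e 0, \<dots>, e (i-1)\<rangle>\<close>, \<open>i \<le> n\<close>, which extends to
  a chain of length at least \<open>n\<close> ending in \<open>\<langle>S\<rangle>\<close>. Ranks of free summands are bounded by the number
  of generators of \<open>M\<close>, so the maximum defining \<open>\<delta>\<close> is attained.\<close>

lemma module_ring_self: "module ((*) :: 'r::comm_ring_1 \<Rightarrow> 'r \<Rightarrow> 'r)"
  by unfold_locales (auto simp: algebra_simps)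

lemma ring_ideal_iff: "ring_ideal (I::'r::comm_ring_1 set) \<longleftrightarrow>
   0 \<in> I \<and> (\<forall>x\<in>I. \<forall>y\<in>I. x + y \<in> I) \<and> (\<forall>c. \<forall>x\<in>I. c * x \<in> I)"
  unfolding ring_ideal_def module.subspace_def[OF module_ring_self] ..

lemma ring_ideal_eq_UNIV: "ring_ideal (I::'r::comm_ring_1 set) \<Longrightarrow> 1 \<in> I \<Longrightarrow> I = UNIV"
  unfolding ring_ideal_iff by (metis UNIV_eq_I mult.right_neutral)

lemma ring_ideal_Union_chain:
  assumes "C \<in> chains {I::'r::comm_ring_1 set. ring_ideal I}" "C \<noteq> {}"
  shows "ring_ideal (\<Union>C)"
  unfolding ring_ideal_iff
proof (intro conjI ballI allI)
  have ideals: "\<And>I. I \<in> C \<Longrightarrow> ring_ideal I" using chainsD2[OF assms(1)] by blast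
  then show "0 \<in> \<Union>C" using assms(2) unfolding ring_ideal_iff by blast
  fix x y assume "x \<in> \<Union>C" "y \<in> \<Union>C"
  then obtain I J where IJ: "I \<in> C" "J \<in> C" "x \<in> I" "y \<in> J" by blast
  from chainsD[OF assms(1) IJ(1,2)] obtain K where "K \<in> C" "x \<in> K" "y \<in> K"
    using IJ by blast
  then show "x + y \<in> \<Union>C" using ideals unfolding ring_ideal_iff by blast
next
  fix c x assume "x \<in> \<Union>C"
  then show "c * x \<in> \<Union>C" using chainsD2[OF assms(1)] unfolding ring_ideal_iff by blast
qed

lemma exists_maximal_ideal_superset:
  assumes "ring_ideal (J::'r::comm_ring_1 set)" "1 \<notin> J"
  shows "\<exists>M. maximal_ideal M \<and> J \<subseteq> M"
proof -
  define A where "A = {I. ring_ideal I \<and> J \<subseteq> I \<and> (1::'r) \<notin> I}"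
  have "\<forall>C\<in>chains A. \<exists>U\<in>A. \<forall>I\<in>C. I \<subseteq> U"
  proof
    fix C assume C: "C \<in> chains A"
    show "\<exists>U\<in>A. \<forall>I\<in>C. I \<subseteq> U"
    proof (cases "C = {}")
      case True
      then show ?thesis using assms unfolding A_def by auto
    next
      case False
      have "C \<in> chains {I. ring_ideal I}" using C unfolding chains_def A_def by auto
      then have "ring_ideal (\<Union>C)" using False by (rule ring_ideal_Union_chain)
      then show ?thesis using C False chainsD2[OF C] unfolding A_def by blast
    qed
  qed
  from Zorn_Lemma2[OF this] obtain M where M: "M \<in> A" "\<forall>I\<in>A. M \<subseteq> I \<longrightarrow> I = M"
    by blast
  have "maximal_ideal M" unfolding maximal_ideal_def
  proof (intro conjI allI impI)
    show "ring_ideal M" "M \<noteq> UNIV" using M(1) unfolding A_def by auto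
    fix I assume I: "ring_ideal I \<and> M \<subseteq> I \<and> I \<noteq> UNIV"
    then have "1 \<notin> I" using ring_ideal_eq_UNIV by blast
    then have "I \<in> A" using I M(1) unfolding A_def by blast
    then show "I = M" using I M(2) by blast
  qed
  then show ?thesis using M(1) unfolding A_def by blast
qed

locale local_ring =
  fixes mm :: "'r::comm_ring_1 set"
  assumes maximal_mm: "maximal_ideal mm"
    and maximal_ideal_unique: "maximal_ideal J \<Longrightarrow> J = mm"
begin

lemma ring_ideal_mm: "ring_ideal mm"
  using maximal_mm unfolding maximal_ideal_def by blast

lemma zero_in_mm: "0 \<in> mm"
  and add_in_mm: "x \<in> mm \<Longrightarrow> y \<in> mm \<Longrightarrow> x + y \<in> mm"
  and mult_in_mm: "x \<in> mm \<Longrightarrow> c * x \<in> mm"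
  using ring_ideal_mm unfolding ring_ideal_iff by blast+

lemma one_notin_mm: "1 \<notin> mm"
  using maximal_mm ring_ideal_eq_UNIV ring_ideal_mm unfolding maximal_ideal_def by blast

lemma unit_if_notin_mm:
  assumes "x \<notin> mm"
  shows "\<exists>y. x * y = 1"
proof (rule ccontr)
  assume no_inverse: "\<nexists>y. x * y = 1"
  have "ring_ideal (range ((*) x))" unfolding ring_ideal_iff
    by (auto simp: mult.left_commute[of _ x] distrib_left[symmetric] intro!: image_eqI[of _ _ 0])
  moreover have "1 \<notin> range ((*) x)" using no_inverse by auto
  ultimately obtain M where "maximal_ideal M" "range ((*) x) \<subseteq> M"
    using exists_maximal_ideal_superset by blast
  then have "x * 1 \<in> mm" using maximal_ideal_unique by blast
  then show False using assms by simp
qed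

end

lemma local_ring_if_noetherian_local_ring: "noetherian_local_ring mm \<Longrightarrow> local_ring mm"
  unfolding noetherian_local_ring_def by unfold_locales blast+

definition dual_system :: "nat \<Rightarrow> (nat \<Rightarrow> 'm) \<Rightarrow> (nat \<Rightarrow> 'm \<Rightarrow> 'r::comm_ring_1) \<Rightarrow> bool" where
  "dual_system n e f \<longleftrightarrow> (\<forall>i<n. \<forall>j<n. f i (e j) = (if i = j then 1 else 0))"

definition submodule_chain ::
  "('r::comm_ring_1 \<Rightarrow> 'm::ab_group_add \<Rightarrow> 'm) \<Rightarrow> 'm set \<Rightarrow> 'm set \<Rightarrow> nat \<Rightarrow> (nat \<Rightarrow> 'm set) \<Rightarrow> bool"
  where "submodule_chain s I N k c \<longleftrightarrow> c 0 = I \<and> c k = N \<and>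
     (\<forall>i\<le>k. module.subspace s (c i)) \<and> (\<forall>i<k. c i \<subset> c (Suc i))"

lemma quot_length_eq_SUP_submodule_chain:
  "quot_length s N I = (SUP k \<in> {k. \<exists>c. submodule_chain s I N k c}. enat k)"
  unfolding quot_length_def submodule_chain_def ..

context module
begin

lemma proj_along_eq:
  assumes "subspace F" "subspace G" "F \<inter> G = {0}" "p \<in> F" "x - p \<in> G"
  shows "proj_along F G x = p"
  unfolding proj_along_def
proof (rule the_equality)
  show "p \<in> F \<and> x - p \<in> G" using assms by blast
next
  fix q assume q: "q \<in> F \<and> x - q \<in> G"
  have "q - p \<in> F" using q assms subspace_diff by blast
  moreover have "(x - p) - (x - q) \<in> G" using q assms subspace_diff by blast
  ultimately have "q - p \<in> F \<inter> G" by simp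
  then show "q = p" using assms(3) by auto
qed

lemma subspace_hom_preimage_ideal:
  "module_hom scale (*) f \<Longrightarrow> ring_ideal J \<Longrightarrow> subspace {x. f x \<in> J}"
  using module_hom.subspace_linear_preimage[of scale "(*)" f J] unfolding ring_ideal_def by blast

lemma module_hom_dual_expansion:
  assumes "\<And>i. i < n \<Longrightarrow> module_hom scale (*) (f i)"
  shows "module_hom scale scale (\<lambda>x. \<Sum>i<n. f i x *s e i)"
  unfolding module_hom_iff
proof (intro conjI allI)
  fix x y
  have "(\<Sum>i<n. f i (x + y) *s e i) = (\<Sum>i<n. f i x *s e i + f i y *s e i)"
    using assms by (intro sum.cong) (simp_all add: module_hom.add[OF assms] scale_left_distrib)
  then show "(\<Sum>i<n. f i (x + y) *s e i) = (\<Sum>i<n. f i x *s e i) + (\<Sum>i<n. f i y *s e i)"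
    by (simp add: sum.distrib)
next
  fix c x
  have "(\<Sum>i<n. f i (c *s x) *s e i) = (\<Sum>i<n. c *s (f i x *s e i))"
    using assms by (intro sum.cong) (simp_all add: module_hom.scale[OF assms])
  then show "(\<Sum>i<n. f i (c *s x) *s e i) = c *s (\<Sum>i<n. f i x *s e i)"
    by (simp add: scale_sum_right)
qed (rule module_axioms)+

lemma dual_system_coord:
  assumes "dual_system n e f" "\<And>i. i < n \<Longrightarrow> module_hom scale (*) (f i)" "k < n"
  shows "f k (\<Sum>i<n. c i *s e i) = c k"
proof -
  have "f k (\<Sum>i<n. c i *s e i) = (\<Sum>i<n. c i * f k (e i))"
    using assms(2,3) by (simp add: module_hom.sum[OF assms(2)] module_hom.scale[OF assms(2)])
  also have "\<dots> = (\<Sum>i<n. if k = i then c i else 0)"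
    using assms unfolding dual_system_def by (intro sum.cong) auto
  finally show ?thesis using assms(3) by simp
qed

lemma dual_system_expand:
  assumes "dual_system n e f" "\<And>i. i < n \<Longrightarrow> module_hom scale (*) (f i)" "x \<in> span (e ` {..<n})"
  shows "(\<Sum>i<n. f i x *s e i) = x"
proof -
  have "module_hom scale scale (\<lambda>x. (\<Sum>i<n. f i x *s e i) - x)"
    using module_pair.module_hom_sub[OF _ module_hom_dual_expansion[OF assms(2)] module_hom_ident]
    by (simp add: module_pair_def module_axioms)
  then have "subspace {x. (\<Sum>i<n. f i x *s e i) - x = 0}"
    using module_hom.subspace_kernel by blast
  moreover have "(\<Sum>i<n. f i (e j) *s e i) = e j" if "j < n" for j
  proof -
    have "(\<Sum>i<n. f i (e j) *s e i) = (\<Sum>i<n. if i = j then e i else 0)"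
      using assms(1) that unfolding dual_system_def by (intro sum.cong) auto
    then show ?thesis using that by simp
  qed
  ultimately have "span (e ` {..<n}) \<subseteq> {x. (\<Sum>i<n. f i x *s e i) - x = 0}"
    by (intro span_minimal) auto
  then show ?thesis using assms(3) by auto
qed

lemma dual_system_direct_sum:
  assumes dual: "dual_system n e f" and hom: "\<And>i. i < n \<Longrightarrow> module_hom scale (*) (f i)"
  defines "F \<equiv> span (e ` {..<n})" and "G \<equiv> {x. \<forall>i<n. f i x = 0}"
  shows "subspace G" and "F \<inter> G = {0}" and "\<forall>x. \<exists>a\<in>F. \<exists>b\<in>G. x = a + b"
    and "proj_along F G x = (\<Sum>i<n. f i x *s e i)"
proof -
  define p where "p = (\<lambda>x. \<Sum>i<n. f i x *s e i)"
  have p_F: "p x \<in> F" for x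
    unfolding p_def F_def by (intro span_sum span_scale span_base) auto
  have p_G: "x - p x \<in> G" for x
    unfolding G_def p_def using dual_system_coord[OF dual hom] by (simp add: module_hom.diff[OF hom])
  show "subspace G"
    unfolding G_def by (rule subspaceI) (simp_all add: module_hom.zero[OF hom]
        module_hom.add[OF hom] module_hom.scale[OF hom])
  have "x = 0" if "x \<in> F" "x \<in> G" for x
    using dual_system_expand[OF dual hom, of x] that unfolding F_def G_def by simp
  then show "F \<inter> G = {0}" using subspace_0[OF \<open>subspace G\<close>] span_zero unfolding F_def by auto
  show "\<forall>x. \<exists>a\<in>F. \<exists>b\<in>G. x = a + b"
  proof
    fix x show "\<exists>a\<in>F. \<exists>b\<in>G. x = a + b"
      using p_F[of x] p_G[of x] by (intro bexI[of _ "p x"] bexI[of _ "x - p x"]) auto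
  qed
  show "proj_along F G x = (\<Sum>i<n. f i x *s e i)"
    using proj_along_eq[OF _ \<open>subspace G\<close> \<open>F \<inter> G = {0}\<close> p_F p_G] unfolding F_def p_def by simp
qed

lemma bij_betw_dual_coordinates:
  assumes dual: "dual_system n e f" and hom: "\<And>i. i < n \<Longrightarrow> module_hom scale (*) (f i)"
  shows "bij_betw (\<lambda>x i. if i < n then f i x else 0) (span (e ` {..<n})) (free_mod n)"
proof (rule bij_betw_imageI)
  show "inj_on (\<lambda>x i. if i < n then f i x else 0) (span (e ` {..<n}))"
  proof
    fix x y assume xy: "x \<in> span (e ` {..<n})" "y \<in> span (e ` {..<n})"
      "(\<lambda>i. if i < n then f i x else 0) = (\<lambda>i. if i < n then f i y else 0)"
    then have "f i x = f i y" if "i < n" for i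
      using fun_cong[OF xy(3), of i] that by simp
    then have "(\<Sum>i<n. f i x *s e i) = (\<Sum>i<n. f i y *s e i)" by (intro sum.cong) auto
    then show "x = y" using dual_system_expand[OF dual hom] xy(1,2) by simp
  qed
  have "free_mod n \<subseteq> (\<lambda>x i. if i < n then f i x else 0) ` span (e ` {..<n})"
  proof
    fix v :: "nat \<Rightarrow> 'a" assume "v \<in> free_mod n"
    then have "v = (\<lambda>i. if i < n then f i (\<Sum>j<n. v j *s e j) else 0)"
      using dual_system_coord[OF dual hom] unfolding free_mod_def by auto
    moreover have "(\<Sum>j<n. v j *s e j) \<in> span (e ` {..<n})"
      by (intro span_sum span_scale span_base) auto
    ultimately show "v \<in> (\<lambda>x i. if i < n then f i x else 0) ` span (e ` {..<n})"
      by (rule image_eqI)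
  qed
  then show "(\<lambda>x i. if i < n then f i x else 0) ` span (e ` {..<n}) = free_mod n"
    unfolding free_mod_def by auto
qed

lemma module_hom_id_minus_rank_one:
  assumes "module_hom scale (*) g"
  shows "module_hom scale scale (\<lambda>x. x - (c * g x) *s a)"
  unfolding module_hom_iff
proof (intro conjI allI)
  fix x y show "x + y - (c * g (x + y)) *s a = x - (c * g x) *s a + (y - (c * g y) *s a)"
    by (simp add: module_hom.add[OF assms] distrib_left scale_left_distrib)
next
  fix r x show "r *s x - (c * g (r *s x)) *s a = r *s (x - (c * g x) *s a)"
    by (simp add: module_hom.scale[OF assms] scale_right_diff_distrib mult.left_commute)
qed (rule module_axioms)+

lemma dual_system_extend:
  assumes "dual_system k e f" "\<And>i. i < k \<Longrightarrow> module_hom scale (*) (f i)" "module_hom scale (*) g"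
    "\<forall>j<k. g (e j) = 0" "g y = 1"
  shows "dual_system (Suc k) (e(k := y - (\<Sum>j<k. f j y *s e j))) (f(k := g))"
proof -
  define y' where "y' = y - (\<Sum>j<k. f j y *s e j)"
  have "f i y' = 0" if "i < k" for i
    using that unfolding y'_def
    by (simp add: module_hom.diff[OF assms(2)] dual_system_coord[OF assms(1,2)])
  moreover have "g y' = 1"
    using assms(3-5) unfolding y'_def
    by (simp add: module_hom.diff[OF assms(3)] module_hom.sum[OF assms(3)] module_hom.scale[OF assms(3)])
  ultimately show ?thesis
    using assms(1,4) unfolding dual_system_def y'_def[symmetric] by (auto simp: less_Suc_eq)
qed

lemma span_eliminate_subset: "span ((\<lambda>i. x i - b i *s x k) ` {..<k}) \<subseteq> span (x ` {..<Suc k})"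
proof (rule span_minimal)
  have "x i \<in> span (x ` {..<Suc k})" if "i \<le> k" for i
    using that by (intro span_base) auto
  then show "(\<lambda>i. x i - b i *s x k) ` {..<k} \<subseteq> span (x ` {..<Suc k})"
    by (auto intro!: span_diff span_scale)
qed simp

lemma submodule_chain_mono:
  assumes "submodule_chain scale I N k c" "i \<le> j" "j \<le> k"
  shows "c i \<subseteq> c j"
  using assms(2,3)
proof (induction j rule: dec_induct)
  case (step m)
  then have "m < k" by simp
  with step have "c i \<subseteq> c m" "c m \<subseteq> c (Suc m)" using assms(1) unfolding submodule_chain_def by auto
  then show ?case by blast
qed simp

lemma submodule_chain_extend:
  assumes "submodule_chain scale I M k c" "M \<subseteq> N" "subspace N"
  shows "\<exists>k'\<ge>k. \<exists>c'. submodule_chain scale I N k' c'"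
proof (cases "M = N")
  case True
  then show ?thesis using assms(1) by blast
next
  case False
  have "submodule_chain scale I N (Suc k) (c(Suc k := N))"
    using assms False unfolding submodule_chain_def by (auto simp: le_Suc_eq less_Suc_eq)
  then show ?thesis using le_SucI by blast
qed

end

locale local_module = local_ring mm + module s
  for mm :: "'r::comm_ring_1 set" and s :: "'r \<Rightarrow> 'm::ab_group_add \<Rightarrow> 'm"
begin

lemma dual_system_card_le:
  assumes "finite A" "dual_system n e f" "\<And>i. i < n \<Longrightarrow> module_hom s (*) (f i)"
    "e ` {..<n} \<subseteq> span A"
  shows "n \<le> card A"
  using assms
proof (induction n arbitrary: A)
  case (Suc n)
  have hom: "module_hom s (*) (f n)" using Suc.prems(3) by simp
  have "f n (e n) = 1" using Suc.prems(2) unfolding dual_system_def by simp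
  moreover have "e n \<in> span A" using Suc.prems(4) by auto
  ultimately have "\<not> span A \<subseteq> {x. f n x \<in> mm}" using one_notin_mm by (metis mem_Collect_eq subsetD)
  then have "\<not> A \<subseteq> {x. f n x \<in> mm}"
    using span_minimal[OF _ subspace_hom_preimage_ideal[OF hom ring_ideal_mm]] by blast
  then obtain a0 where a0: "a0 \<in> A" "f n a0 \<notin> mm" by blast
  obtain u where u: "f n a0 * u = 1" using unit_if_notin_mm[OF a0(2)] by blast
  text \<open>Project along \<open>a0\<close> onto \<open>ker (f n)\<close>: this kills \<open>a0\<close> and fixes the \<open>e j\<close>, \<open>j < n\<close>.\<close>
  define \<pi> where "\<pi> = (\<lambda>x. x - s (u * f n x) a0)"
  have \<pi>_hom: "module_hom s s \<pi>" unfolding \<pi>_def by (rule module_hom_id_minus_rank_one[OF hom])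
  have "\<pi> a0 = 0" unfolding \<pi>_def using u by (simp add: mult.commute)
  define A' where "A' = \<pi> ` (A - {a0})"
  have "\<pi> ` A \<subseteq> insert 0 A'" using \<open>\<pi> a0 = 0\<close> unfolding A'_def by auto
  also have "\<dots> \<subseteq> span A'" using span_zero span_superset by blast
  finally have span_\<pi>A: "span (\<pi> ` A) \<subseteq> span A'" by (intro span_minimal) auto
  have "e j \<in> span A'" if "j < n" for j
  proof -
    have "\<pi> (e j) = e j" using Suc.prems(2) that unfolding dual_system_def \<pi>_def by simp
    moreover have "e j \<in> span A" using Suc.prems(4) that by auto
    ultimately have "e j \<in> \<pi> ` span A" by (metis image_eqI)
    then show ?thesis using module_hom.span_image[OF \<pi>_hom] span_\<pi>A by blast
  qed
  then have e_A': "e ` {..<n} \<subseteq> span A'" by auto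
  have "finite A'" unfolding A'_def using Suc.prems(1) by simp
  moreover have "dual_system n e f" using Suc.prems(2) unfolding dual_system_def by simp
  ultimately have "n \<le> card A'" by (rule Suc.IH[OF _ _ _ e_A']) (simp add: Suc.prems(3))
  also have "card A' \<le> card A - 1"
    unfolding A'_def using card_image_le[of "A - {a0}" \<pi>] Suc.prems(1) a0(1) by simp
  finally have "n \<le> card A - 1" .
  moreover have "card A \<noteq> 0" using a0(1) Suc.prems(1) by auto
  ultimately show ?case by linarith
qed simp

definition independent_mod :: "'m set \<Rightarrow> nat \<Rightarrow> (nat \<Rightarrow> 'm) \<Rightarrow> bool" where
  "independent_mod I k x \<longleftrightarrow> (\<forall>a. (\<Sum>i<k. s (a i) (x i)) \<in> I \<longrightarrow> (\<forall>i<k. a i \<in> mm))"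

lemma independent_mod_last_notin:
  assumes "independent_mod I (Suc k) x"
  shows "x k \<notin> I"
proof
  define a where "a = (\<lambda>i. if i = k then (1::'r) else 0)"
  have "(\<Sum>i<Suc k. s (a i) (x i)) = (\<Sum>i<Suc k. if i = k then x i else 0)"
    unfolding a_def by (intro sum.cong) auto
  also have "\<dots> = x k" by simp
  finally have "x k \<in> I \<Longrightarrow> \<forall>i<Suc k. a i \<in> mm"
    using assms unfolding independent_mod_def by metis
  moreover assume "x k \<in> I"
  ultimately have "a k \<in> mm" by blast
  then show False using one_notin_mm unfolding a_def by simp
qed

lemma independent_mod_eliminate:
  assumes "independent_mod I (Suc k) x"
  shows "independent_mod I k (\<lambda>i. x i - s (b i) (x k))"
  unfolding independent_mod_def
proof (intro allI impI)
  fix a i assume sum_in: "(\<Sum>i<k. s (a i) (x i - s (b i) (x k))) \<in> I" and "i < k"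
  define a' where "a' = a(k := - (\<Sum>i<k. a i * b i))"
  have "(\<Sum>i<k. s (a i) (x i - s (b i) (x k))) = (\<Sum>i<k. s (a i) (x i)) - s (\<Sum>i<k. a i * b i) (x k)"
    by (simp add: scale_right_diff_distrib sum_subtractf scale_sum_left)
  also have "\<dots> = (\<Sum>i<Suc k. s (a' i) (x i))"
    unfolding a'_def by simp
  finally have "(\<Sum>i<Suc k. s (a' i) (x i)) \<in> I" using sum_in by simp
  then have "\<forall>i<Suc k. a' i \<in> mm" using assms unfolding independent_mod_def by blast
  then have "a' i \<in> mm" using \<open>i < k\<close> by simp
  then show "a i \<in> mm" using \<open>i < k\<close> unfolding a'_def by simp
qed

lemma independent_mod_of_submodule_chain:
  assumes chain: "submodule_chain s I N k c" and mm_N: "\<And>a y. a \<in> mm \<Longrightarrow> y \<in> N \<Longrightarrow> s a y \<in> I"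
  shows "\<exists>x. (\<forall>i<k. x i \<in> N) \<and> independent_mod I k x"
proof -
  have sub: "\<And>i. i \<le> k \<Longrightarrow> subspace (c i)" and "c 0 = I" "c k = N"
    and "\<forall>i<k. \<exists>y. y \<in> c (Suc i) - c i"
    using chain unfolding submodule_chain_def by (auto dest: psubset_imp_ex_mem)
  then obtain x where x: "\<And>i. i < k \<Longrightarrow> x i \<in> c (Suc i) - c i" by metis
  have x_N: "x i \<in> N" if "i < k" for i
    using x[OF that] submodule_chain_mono[OF chain, of "Suc i" k] that \<open>c k = N\<close> by auto
  text \<open>In a relation of length \<open>m + 1\<close> the last term lies in \<open>c m\<close>, so its coefficient is not a
    unit; that term then lies in \<open>I\<close> and can be dropped.\<close>
  have "\<forall>i<m. a i \<in> mm" if "m \<le> k" "(\<Sum>i<m. s (a i) (x i)) \<in> I" for m a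
    using that
  proof (induction m)
    case (Suc m)
    have c_m: "subspace (c m)" using sub Suc.prems(1) by simp
    have "x i \<in> c m" if "i < m" for i
      using x[of i] submodule_chain_mono[OF chain, of "Suc i" m] that Suc.prems(1) by auto
    then have sum_m: "(\<Sum>i<m. s (a i) (x i)) \<in> c m"
      by (intro subspace_sum subspace_scale c_m) simp
    have "(\<Sum>i<Suc m. s (a i) (x i)) \<in> c m"
      using Suc.prems submodule_chain_mono[OF chain, of 0 m] \<open>c 0 = I\<close> by auto
    from subspace_diff[OF c_m this sum_m] have "s (a m) (x m) \<in> c m" by simp
    have a_m: "a m \<in> mm"
    proof (rule ccontr)
      assume "a m \<notin> mm"
      then obtain v where "a m * v = 1" using unit_if_notin_mm by blast
      then have "x m = s v (s (a m) (x m))" by (simp add: mult.commute)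
      then have "x m \<in> c m" using subspace_scale[OF c_m \<open>s (a m) (x m) \<in> c m\<close>] by metis
      then show False using x Suc.prems(1) by auto
    qed
    then have "s (a m) (x m) \<in> I" using mm_N x_N Suc.prems(1) by simp
    from subspace_diff[OF _ Suc.prems(2) this] have "(\<Sum>i<m. s (a i) (x i)) \<in> I"
      using sub[of 0] \<open>c 0 = I\<close> by simp
    then show ?case using Suc a_m by (simp add: less_Suc_eq)
  qed simp
  then show ?thesis using x_N unfolding independent_mod_def by blast
qed

lemma dual_system_submodule_chain:
  assumes "dual_system n e f" "\<And>i. i < n \<Longrightarrow> module_hom s (*) (f i)" "subspace I"
    "\<And>i y. i < n \<Longrightarrow> y \<in> I \<Longrightarrow> f i y \<in> mm"
  shows "submodule_chain s I (span (I \<union> e ` {..<n})) n (\<lambda>i. span (I \<union> e ` {..<i}))"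
proof -
  have e_notin: "e i \<notin> span (I \<union> e ` {..<i})" if "i < n" for i
  proof -
    have "I \<union> e ` {..<i} \<subseteq> {x. f i x \<in> mm}"
      using assms(1,4) that zero_in_mm unfolding dual_system_def by auto
    then have "span (I \<union> e ` {..<i}) \<subseteq> {x. f i x \<in> mm}"
      by (intro span_minimal subspace_hom_preimage_ideal assms(2) that ring_ideal_mm)
    moreover have "f i (e i) = 1" using assms(1) that unfolding dual_system_def by simp
    ultimately show ?thesis using one_notin_mm by auto
  qed
  have "span (I \<union> e ` {..<i}) \<subset> span (I \<union> e ` {..<Suc i})" if "i < n" for i
  proof (rule psubsetI)
    show "span (I \<union> e ` {..<i}) \<subseteq> span (I \<union> e ` {..<Suc i})" by (intro span_mono) auto
    have "e i \<in> span (I \<union> e ` {..<Suc i})" by (intro span_base) auto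
    then show "span (I \<union> e ` {..<i}) \<noteq> span (I \<union> e ` {..<Suc i})" using e_notin[OF that] by blast
  qed
  then show ?thesis
    unfolding submodule_chain_def using assms(3) by simp
qed

end

locale local_module_dual = local_module mm s
  for mm :: "'r::comm_ring_1 set" and s :: "'r \<Rightarrow> 'm::ab_group_add \<Rightarrow> 'm" +
  fixes E :: "('m \<Rightarrow> 'r) set"
  assumes dual_submodule_E: "dual_submodule s E"
begin

lemma module_hom_if_in_E: "f \<in> E \<Longrightarrow> module_hom s (*) f"
  using dual_submodule_E unfolding dual_submodule_def by blast

lemma mult_in_E: "f \<in> E \<Longrightarrow> (\<lambda>x. c * f x) \<in> E"
  using dual_submodule_E unfolding dual_submodule_def by blast

lemma free_E_summand_of_dual_system:
  assumes dual: "dual_system n e f" and f_E: "\<And>i. i < n \<Longrightarrow> f i \<in> E"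
  shows "free_E_summand s E (span (e ` {..<n})) n"
proof -
  have hom: "\<And>i. i < n \<Longrightarrow> module_hom s (*) (f i)" using f_E module_hom_if_in_E by blast
  define F where "F = span (e ` {..<n})"
  define G where "G = {x. \<forall>i<n. f i x = 0}"
  define \<phi> where "\<phi> = (\<lambda>x i. if i < n then f i x else 0)"
  note direct_sum = dual_system_direct_sum[OF dual hom, folded F_def G_def]
  have "\<forall>x\<in>F. \<forall>y\<in>F. \<phi> (x + y) = (\<lambda>i. \<phi> x i + \<phi> y i)"
    unfolding \<phi>_def by (simp add: fun_eq_iff module_hom.add[OF hom])
  moreover have "\<forall>c. \<forall>x\<in>F. \<phi> (s c x) = (\<lambda>i. c * \<phi> x i)"
    unfolding \<phi>_def by (simp add: fun_eq_iff module_hom.scale[OF hom])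
  moreover have "\<forall>i<n. (\<lambda>x. \<phi> (proj_along F G x) i) = f i"
    using direct_sum(4) dual_system_coord[OF dual hom] unfolding \<phi>_def by auto
  moreover have "subspace F" "bij_betw \<phi> F (free_mod n)"
    unfolding F_def \<phi>_def using bij_betw_dual_coordinates[OF dual hom] by simp_all
  ultimately have "subspace F \<and> subspace G \<and> (\<forall>x. \<exists>a\<in>F. \<exists>b\<in>G. x = a + b) \<and> F \<inter> G = {0} \<and>
      (\<forall>x\<in>F. \<forall>y\<in>F. \<phi> (x + y) = (\<lambda>i. \<phi> x i + \<phi> y i)) \<and>
      (\<forall>c. \<forall>x\<in>F. \<phi> (s c x) = (\<lambda>i. c * \<phi> x i)) \<and>
      bij_betw \<phi> F (free_mod n) \<and> (\<forall>i<n. (\<lambda>x. \<phi> (proj_along F G x) i) \<in> E)"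
    using direct_sum(1-3) f_E by simp
  then show ?thesis unfolding free_E_summand_def F_def[symmetric] by (intro exI)
qed

lemma dual_system_of_free_E_summand:
  assumes "free_E_summand s E F n"
  shows "\<exists>e f. dual_system n e f \<and> (\<forall>i<n. f i \<in> E) \<and> e ` {..<n} \<subseteq> F"
proof -
  obtain G \<phi> where F: "subspace F" "subspace G" "F \<inter> G = {0}" "bij_betw \<phi> F (free_mod n)"
    "\<forall>i<n. (\<lambda>x. \<phi> (proj_along F G x) i) \<in> E"
    using assms unfolding free_E_summand_def by blast
  define \<delta> :: "nat \<Rightarrow> nat \<Rightarrow> 'r" where "\<delta> = (\<lambda>j i. if i = j then 1 else 0)"
  define e where "e = (\<lambda>j. inv_into F \<phi> (\<delta> j))"
  define f where "f = (\<lambda>i x. \<phi> (proj_along F G x) i)"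
  have e: "e j \<in> F \<and> \<phi> (e j) = \<delta> j" if "j < n" for j
  proof -
    have "\<delta> j \<in> \<phi> ` F"
      using that bij_betw_imp_surj_on[OF F(4)] unfolding free_mod_def \<delta>_def by auto
    then show ?thesis unfolding e_def by (simp add: inv_into_into f_inv_into_f)
  qed
  have "proj_along F G (e j) = e j" if "j < n" for j
    by (rule proj_along_eq[OF F(1-3)]) (use e that F(2) subspace_0 in auto)
  then have "dual_system n e f"
    unfolding dual_system_def f_def using e \<delta>_def by auto
  moreover have "\<forall>i<n. f i \<in> E" using F(5) unfolding f_def by blast
  ultimately show ?thesis using e by blast
qed

lemma free_E_summand_rank_le_card:
  assumes "finite A" "span A = UNIV" "free_E_summand s E F n"
  shows "n \<le> card A"
proof -
  obtain e f where "dual_system n e f" "\<forall>i<n. f i \<in> E"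
    using dual_system_of_free_E_summand[OF assms(3)] by blast
  then show ?thesis
    using dual_system_card_le[OF assms(1)] module_hom_if_in_E assms(2) by simp
qed

lemma I_E_subset_span: "I_E s mm E S \<subseteq> span S"
  unfolding I_E_def by blast

lemma subspace_I_E: "subspace (I_E s mm E S)"
  unfolding I_E_def
  by (rule subspaceI) (auto simp: module_hom.add[OF module_hom_if_in_E] module_hom.scale[OF module_hom_if_in_E]
      module_hom.zero[OF module_hom_if_in_E] span_add span_scale span_zero zero_in_mm add_in_mm mult_in_mm)

lemma scale_in_I_E: "a \<in> mm \<Longrightarrow> y \<in> span S \<Longrightarrow> s a y \<in> I_E s mm E S"
  unfolding I_E_def
  by (auto simp: module_hom.scale[OF module_hom_if_in_E] span_scale mult.commute[of a] mult_in_mm)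

lemma exists_E_one_if_notin_I_E:
  assumes "y \<in> span S" "y \<notin> I_E s mm E S"
  shows "\<exists>g\<in>E. g y = 1"
proof -
  obtain g where "g \<in> E" "g y \<notin> mm" using assms unfolding I_E_def by blast
  moreover obtain u where "g y * u = 1" using unit_if_notin_mm[OF \<open>g y \<notin> mm\<close>] by blast
  ultimately show ?thesis using mult_in_E[of g u] by (metis mult.commute)
qed

lemma dual_system_of_independent_mod:
  assumes "\<forall>i<k. x i \<in> span S" "independent_mod (I_E s mm E S) k x"
  shows "\<exists>e f. dual_system k e f \<and> (\<forall>i<k. f i \<in> E) \<and> e ` {..<k} \<subseteq> span (x ` {..<k})"
  using assms
proof (induction k arbitrary: x)
  case 0
  then show ?case by (simp add: dual_system_def)
next
  case (Suc k)
  obtain g where g: "g \<in> E" "g (x k) = 1"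
    using exists_E_one_if_notin_I_E Suc.prems independent_mod_last_notin by blast
  have g_hom: "module_hom s (*) g" using module_hom_if_in_E[OF g(1)] .
  define x' where "x' = (\<lambda>i. x i - s (g (x i)) (x k))"
  have "x' i \<in> span S" if "i < k" for i
    unfolding x'_def using Suc.prems(1) that by (intro span_diff span_scale) auto
  then have "\<forall>i<k. x' i \<in> span S" by blast
  moreover have "independent_mod (I_E s mm E S) k x'"
    unfolding x'_def using Suc.prems(2) by (rule independent_mod_eliminate)
  ultimately obtain e f where ef: "dual_system k e f" "\<forall>i<k. f i \<in> E" "e ` {..<k} \<subseteq> span (x' ` {..<k})"
    using Suc.IH by blast
  have "x' ` {..<k} \<subseteq> {y. g y = 0}"
    unfolding x'_def using g(2) by (auto simp: module_hom.diff[OF g_hom] module_hom.scale[OF g_hom])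
  then have "span (x' ` {..<k}) \<subseteq> {y. g y = 0}"
    by (intro span_minimal module_hom.subspace_kernel[OF g_hom])
  then have "\<forall>j<k. g (e j) = 0" using ef(3) by blast
  moreover have "\<And>i. i < k \<Longrightarrow> module_hom s (*) (f i)" using ef(2) module_hom_if_in_E by blast
  ultimately have "dual_system (Suc k) (e(k := x k - (\<Sum>j<k. s (f j (x k)) (e j)))) (f(k := g))"
    using dual_system_extend[OF ef(1) _ g_hom _ g(2)] by blast
  moreover have "\<forall>i<Suc k. (f(k := g)) i \<in> E" using ef(2) g(1) by (simp add: less_Suc_eq)
  moreover have "e(k := x k - (\<Sum>j<k. s (f j (x k)) (e j))) ` {..<Suc k} \<subseteq> span (x ` {..<Suc k})"
  proof -
    have e_span: "e ` {..<k} \<subseteq> span (x ` {..<Suc k})"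
      using ef(3) span_eliminate_subset[of x "\<lambda>i. g (x i)" k] unfolding x'_def by blast
    have "x k \<in> span (x ` {..<Suc k})" by (intro span_base) auto
    then have "x k - (\<Sum>j<k. s (f j (x k)) (e j)) \<in> span (x ` {..<Suc k})"
      using e_span by (intro span_diff span_sum span_scale) auto
    then show ?thesis using e_span by (auto simp: lessThan_Suc)
  qed
  ultimately show ?case by blast
qed

lemma free_E_summand_of_submodule_chain:
  assumes "submodule_chain s (I_E s mm E S) (span S) k c"
  shows "\<exists>F. free_E_summand s E F k \<and> F \<subseteq> span S"
proof -
  obtain x where x: "\<forall>i<k. x i \<in> span S" "independent_mod (I_E s mm E S) k x"
    using independent_mod_of_submodule_chain[OF assms scale_in_I_E] by blast
  then obtain e f where ef: "dual_system k e f" "\<forall>i<k. f i \<in> E" "e ` {..<k} \<subseteq> span (x ` {..<k})"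
    using dual_system_of_independent_mod by blast
  have "span (x ` {..<k}) \<subseteq> span S" using x(1) by (intro span_minimal) auto
  then have "span (e ` {..<k}) \<subseteq> span S" using ef(3) by (intro span_minimal) auto
  moreover have "free_E_summand s E (span (e ` {..<k})) k"
    using ef(1,2) by (intro free_E_summand_of_dual_system) auto
  ultimately show ?thesis by blast
qed

lemma submodule_chain_of_free_E_summand:
  assumes "free_E_summand s E F n" "F \<subseteq> span S"
  shows "\<exists>k\<ge>n. \<exists>c. submodule_chain s (I_E s mm E S) (span S) k c"
proof -
  obtain e f where ef: "dual_system n e f" "\<forall>i<n. f i \<in> E" "e ` {..<n} \<subseteq> F"
    using dual_system_of_free_E_summand[OF assms(1)] by blast
  have "submodule_chain s (I_E s mm E S) (span (I_E s mm E S \<union> e ` {..<n})) n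
      (\<lambda>i. span (I_E s mm E S \<union> e ` {..<i}))"
    using ef(1,2) module_hom_if_in_E subspace_I_E unfolding I_E_def
    by (intro dual_system_submodule_chain) auto
  moreover have "span (I_E s mm E S \<union> e ` {..<n}) \<subseteq> span S"
    using I_E_subset_span ef(3) assms(2) by (intro span_minimal) auto
  ultimately obtain k c where "k \<ge> n" "submodule_chain s (I_E s mm E S) (span S) k c"
    using submodule_chain_extend by blast
  then show ?thesis by blast
qed

lemma delta_E_greatest:
  assumes "finite A" "span A = UNIV"
  shows "\<exists>F. free_E_summand s E F (delta_E s E S) \<and> F \<subseteq> span S"
    and "free_E_summand s E F n \<Longrightarrow> F \<subseteq> span S \<Longrightarrow> n \<le> delta_E s E S"
proof -
  define D where "D = (\<lambda>n. \<exists>F. free_E_summand s E F n \<and> F \<subseteq> span S)"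
  have bound: "D n \<Longrightarrow> n \<le> card A" for n
    unfolding D_def using free_E_summand_rank_le_card[OF assms] by blast
  have "free_E_summand s E (span ({}::'m set)) 0"
    using free_E_summand_of_dual_system[of 0 "\<lambda>_. 0" "\<lambda>_ _. 0"] by (simp add: dual_system_def)
  then have "D 0" unfolding D_def using span_mono[of "{}" S] by blast
  have delta: "delta_E s E S = Greatest D" unfolding delta_E_def D_def ..
  show "\<exists>F. free_E_summand s E F (delta_E s E S) \<and> F \<subseteq> span S"
    using GreatestI_nat[of D, OF \<open>D 0\<close> bound] unfolding delta D_def .
  show "n \<le> delta_E s E S" if "free_E_summand s E F n" "F \<subseteq> span S"
    using Greatest_le_nat[of D n, OF _ bound] that unfolding delta D_def by blast
qed

end

theorem lemma4p6:
  fixes s :: "'r::comm_ring_1 \<Rightarrow> 'm::ab_group_add \<Rightarrow> 'm"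
    and mm :: "'r set" and S :: "'m set" and E :: "('m \<Rightarrow> 'r) set"
  assumes "noetherian_local_ring mm"
    and "module s"
    and "fin_gen_module s"
    and "dual_submodule s E"
  shows "enat (delta_E s E S) = quot_length s (module.span s S) (I_E s mm E S)"
proof -
  interpret local_module_dual mm s E
    using assms local_ring_if_noetherian_local_ring
    by (simp add: local_module_dual_def local_module_def local_module_dual_axioms_def)
  obtain A where A: "finite A" "span A = UNIV" using assms(3) unfolding fin_gen_module_def by blast
  show ?thesis unfolding quot_length_eq_SUP_submodule_chain
  proof (rule antisym)
    obtain k where "delta_E s E S \<le> k" "\<exists>c. submodule_chain s (I_E s mm E S) (span S) k c"
      using delta_E_greatest(1)[OF A] submodule_chain_of_free_E_summand by blast
    then show "enat (delta_E s E S) \<le> (SUP k \<in> {k. \<exists>c. submodule_chain s (I_E s mm E S) (span S) k c}. enat k)"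
      by (force intro: SUP_upper2)
  next
    show "(SUP k \<in> {k. \<exists>c. submodule_chain s (I_E s mm E S) (span S) k c}. enat k) \<le> enat (delta_E s E S)"
    proof (rule SUP_least)
      fix k assume "k \<in> {k. \<exists>c. submodule_chain s (I_E s mm E S) (span S) k c}"
      then obtain F where "free_E_summand s E F k" "F \<subseteq> span S"
        using free_E_summand_of_submodule_chain by blast
      then show "enat k \<le> enat (delta_E s E S)" using delta_E_greatest(2)[OF A] by simp
    qed
  qed
qed

end
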